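(* Let $\xi\in\mathbb{C}$ satisfy $|\mathrm{Im}(\xi)|<a/2$, and define $$S_\xi(x,y)=\prod_{n=1}^N\frac{G_R(y_n-x_{n+1}-ia/2-\eta/2+\xi)}{G_L(y_n-x_n+ia/2+\eta/2+\xi)},\qquad x_{N+1}=x_1.$$ Then the operator on $L^2(E)$ given by $(\hat S_\xi f)(x)=\int_ES_\xi(x,y)f(y)\,d\lambda_E(y)$, $f\in L^2(E)$, is a Hilbert–Schmidt operator.
   Context: Fix $a_+,a_->0$, $a=(a_++a_-)/2$, $\eta\in\mathbb{R}$, $N\ge2$. The hyperbolic gamma function $G(z)$ is the meromorphic function on $\mathbb{C}$ given for $|\mathrm{Im}\,z|<a$ by $G(z)=\exp\Big(i\int_0^\infty\frac{dy}{y}\Big(\frac{\sin(2yz)}{2\sinh(a_+y)\sinh(a_-y)}-\frac{z}{a_+a_-y}\Big)\Big)$, extended meromorphically. With $\chi=\frac{\pi}{24}(a_+/a_-+a_-/a_+)$, $G_R(z)=G(z)\exp(i\chi+i\pi z^2/(2a_+a_-))$ and $G_L(z)=G(z)\exp(-i\chi-i\pi z^2/(2a_+a_-))$. $E=\{x\in\mathbb{R}^N: x_1+\cdots+x_N=0\}$ with the Euclidean structure inherited from $\mathbb{R}^N$ and its Lebesgue measure $\lambda_E$. *)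

theory Defs
  imports "HOL-Analysis.Analysis"
begin

text \<open>Hyperbolic gamma function, given by its integral representation, valid on the
  strip |Im z| < a = (ap + am)/2.  Only values in this strip are used below.\<close>
definition hgamma :: "real \<Rightarrow> real \<Rightarrow> complex \<Rightarrow> complex" where
  "hgamma ap am z = exp (\<i> * (LINT y:{0<..}|lborel.
      (sin (2 * complex_of_real y * z) / complex_of_real (2 * sinh (ap * y) * sinh (am * y))
       - z / complex_of_real (ap * am * y)) / complex_of_real y))"

definition hchi :: "real \<Rightarrow> real \<Rightarrow> real" where
  "hchi ap am = pi / 24 * (ap / am + am / ap)"

definition hgammaR :: "real \<Rightarrow> real \<Rightarrow> complex \<Rightarrow> complex" where
  "hgammaR ap am z = hgamma ap am z *
     exp (\<i> * complex_of_real (hchi ap am) + \<i> * complex_of_real pi * z\<^sup>2 / complex_of_real (2 * ap * am))"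

definition hgammaL :: "real \<Rightarrow> real \<Rightarrow> complex \<Rightarrow> complex" where
  "hgammaL ap am z = hgamma ap am z *
     exp (- \<i> * complex_of_real (hchi ap am) - \<i> * complex_of_real pi * z\<^sup>2 / complex_of_real (2 * ap * am))"

text \<open>Points of R^N are functions nat \<Rightarrow> real, extensional on {..<N}.
  The hyperplane E = {x. x_0 + ... + x_{N-1} = 0} is parametrised by its first N-1
  coordinates; embE is this parametrisation.\<close>
definition embE :: "nat \<Rightarrow> (nat \<Rightarrow> real) \<Rightarrow> (nat \<Rightarrow> real)" where
  "embE N u = restrict (\<lambda>i. if i < N - 1 then u i else - (\<Sum>j<N - 1. u j)) {..<N}"

text \<open>Lebesgue measure on E induced by the Euclidean structure of R^N:
  the pushforward of Lebesgue measure on R^(N-1) under embE, times the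
  Jacobian factor sqrt(det(I + 1 1^T)) = sqrt N.\<close>
definition lebesgueE :: "nat \<Rightarrow> (nat \<Rightarrow> real) measure" where
  "lebesgueE N = density (distr (PiM {..<N - 1} (\<lambda>_. lborel)) (PiM {..<N} (\<lambda>_. lborel)) (embE N))
                   (\<lambda>_. ennreal (sqrt (real N)))"

definition square_integrable :: "'a measure \<Rightarrow> ('a \<Rightarrow> complex) \<Rightarrow> bool" where
  "square_integrable M f \<longleftrightarrow> f \<in> borel_measurable M \<and> integrable M (\<lambda>x. (cmod (f x))\<^sup>2)"

text \<open>The integral operator with kernel K on L^2(M) is a (well-defined) Hilbert--Schmidt
  operator: it maps L^2(M) into L^2(M), and the sums of ||T e||^2 over finite orthonormal
  families e are uniformly bounded (equivalently, the sum over an orthonormal basis is finite).\<close>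
definition hilbert_schmidt_integral_op :: "'a measure \<Rightarrow> ('a \<Rightarrow> 'a \<Rightarrow> complex) \<Rightarrow> bool" where
  "hilbert_schmidt_integral_op M K \<longleftrightarrow>
     (\<forall>f. square_integrable M f \<longrightarrow>
        (AE x in M. integrable M (\<lambda>y. K x y * f y)) \<and>
        square_integrable M (\<lambda>x. LINT y|M. K x y * f y)) \<and>
     (\<exists>C::real. \<forall>es :: ('a \<Rightarrow> complex) list.
        (\<forall>e\<in>set es. square_integrable M e) \<and>
        (\<forall>i<length es. \<forall>j<length es.
            (LINT x|M. (es!i) x * cnj ((es!j) x)) = (if i = j then 1 else 0)) \<longrightarrow>
        (\<Sum>e\<leftarrow>es. LINT x|M. (cmod (LINT y|M. K x y * e y))\<^sup>2) \<le> C)"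

definition kernelS :: "real \<Rightarrow> real \<Rightarrow> real \<Rightarrow> nat \<Rightarrow> complex \<Rightarrow> (nat \<Rightarrow> real) \<Rightarrow> (nat \<Rightarrow> real) \<Rightarrow> complex" where
  "kernelS ap am \<eta> N \<xi> x y =
     (let a = (ap + am) / 2 in
      \<Prod>n<N. hgammaR ap am (complex_of_real (y n - x ((n + 1) mod N)) - \<i> * complex_of_real (a / 2)
                                - complex_of_real (\<eta> / 2) + \<xi>)
            / hgammaL ap am (complex_of_real (y n - x n) + \<i> * complex_of_real (a / 2)
                                + complex_of_real (\<eta> / 2) + \<xi>))"

end

theory Submission
  imports Defs "HOL-Probability.Sinc_Integral" "HOL-Real_Asymp.Real_Asymp"
begin

(* On a horizontal line Im z = w inside the strip, |G(u + i w)| = exp (pi w |u| / (a_+ a_-) + O(1)):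
   the imaginary part of the integrand in the integral representation of G splits into a part whose
   integral is bounded uniformly in u and the part (w / (a_+ a_-)) (1 - cos (2 u y)) / y^2, whose
   integral is pi |u| by the sine integral.  Together with the Gaussian factors of G_R and G_L, the
   n-th factor of S_xi is bounded by C exp (- gamma (max (x_(n+1) - y_n) 0 + max (y_n - x_n) 0))
   up to shifts by constants, and on the hyperplane E these exponents dominate the l1-norm of (x, y).
   So S_xi decays exponentially and is square integrable on E x E.  An integral operator with square
   integrable kernel on a sigma-finite space is Hilbert--Schmidt, by the Cauchy--Schwarz inequality
   and Bessel's inequality for the sections of the kernel. *)

lemma set_integrable_inverse_square:
  fixes R :: real assumes "R > 0"
  shows "set_integrable lborel {R<..} (\<lambda>y. 1 / y^2)"
proof -
  have "((\<lambda>y. - 1 / y) \<longlongrightarrow> - 1 / R) (at_right R)"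
    using assms by (intro tendsto_intros) auto
  moreover have "((\<lambda>y::real. - 1 / y) \<longlongrightarrow> 0) at_top"
    by real_asymp
  moreover have "((\<lambda>y. - 1 / y) has_real_derivative 1 / y^2) (at y)" if "R < y" for y
    using that assms by (auto intro!: derivative_eq_intros simp: power2_eq_square)
  ultimately show ?thesis
    using interval_integral_FTC_nonneg[of R \<infinity> "\<lambda>y. - 1 / y" "\<lambda>y. 1 / y^2" "- 1 / R" 0] assms
    by (auto simp: ereal_tendsto_simps intro!: continuous_intros)
qed

lemma set_integrable_Ioi_bigo:
  fixes h :: "real \<Rightarrow> real"
  assumes h_meas: "h \<in> borel_measurable borel" and h_cont: "continuous_on {0<..} h"
    and near_0: "h \<in> O[at_right 0](\<lambda>_. 1)" and near_top: "h \<in> O(\<lambda>y. 1 / y^2)"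
  shows "set_integrable lborel {0<..} h"
proof -
  obtain C0 \<epsilon> where "\<epsilon> > 0" and C0: "\<And>y. 0 < y \<Longrightarrow> y < \<epsilon> \<Longrightarrow> \<bar>h y\<bar> \<le> C0"
  proof -
    obtain c where "\<forall>\<^sub>F y in at_right 0. \<bar>h y\<bar> \<le> c"
      using landau_o.bigE[OF near_0] by auto
    then show ?thesis using that by (auto simp: eventually_at_right_field)
  qed
  obtain C1 where "\<forall>\<^sub>F y in at_top. \<bar>h y\<bar> \<le> C1 / y^2"
    using landau_o.bigE[OF near_top] by auto
  then obtain R0 where C1: "\<And>y. y \<ge> R0 \<Longrightarrow> \<bar>h y\<bar> \<le> C1 / y^2"
    by (auto simp: eventually_at_top_linorder)
  define R where "R = max R0 \<epsilon>"
  have "R > 0" using \<open>\<epsilon> > 0\<close> by (simp add: R_def)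
  have "compact (h ` {\<epsilon>..R})"
    using \<open>\<epsilon> > 0\<close> by (intro compact_continuous_image continuous_on_subset[OF h_cont]) auto
  then obtain C2 where C2: "\<And>y. \<epsilon> \<le> y \<Longrightarrow> y \<le> R \<Longrightarrow> \<bar>h y\<bar> \<le> C2"
    by (fastforce dest: compact_imp_bounded simp: bounded_real)
  have "set_integrable lborel {0<..R} h"
    unfolding set_integrable_def
  proof (rule integrableI_bounded_set_indicator[where B = "max C0 C2"])
    show "AE y in lborel. y \<in> {0<..R} \<longrightarrow> norm (h y) \<le> max C0 C2"
      using C0 C2 by (force simp: not_less)
  qed (use h_meas \<open>R > 0\<close> in \<open>auto simp: emeasure_lborel_Ioc\<close>)
  moreover have "set_integrable lborel {R<..} h"
  proof (rule set_integrable_bound[OF set_integrable_mult_right[OF set_integrable_inverse_square[OF \<open>R > 0\<close>]]])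
    show "AE y in lborel. y \<in> {R<..} \<longrightarrow> norm (h y) \<le> norm (C1 * (1 / y^2))"
    proof (intro AE_I2 impI)
      fix y assume "y \<in> {R<..}"
      then have "\<bar>h y\<bar> \<le> C1 / y^2" by (intro C1) (simp add: R_def)
      also have "\<dots> \<le> \<bar>C1\<bar> / y^2" by (simp add: divide_right_mono)
      finally show "norm (h y) \<le> norm (C1 * (1 / y^2))" by simp
    qed
  qed (use h_meas in \<open>auto simp: set_borel_measurable_def\<close>)
  ultimately have "set_integrable lborel ({0<..R} \<union> {R<..}) h"
    by (rule set_integrable_Un) auto
  moreover have "{0<..R} \<union> {R<..} = {0<..}"
    using \<open>R > 0\<close> by auto
  ultimately show ?thesis by simp
qed

section \<open>The integral of (1 - cos (2 u y)) / y^2\<close>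

lemma has_real_derivative_Si_primitive:
  fixes w y :: real assumes "w > 0" "y > 0"
  shows "((\<lambda>y. 2 * w * Si (2 * w * y) - (1 - cos (2 * w * y)) / y) has_real_derivative (1 - cos (2 * w * y)) / y^2) (at y)"
proof -
  have "((\<lambda>y. 2 * w * Si (2 * w * y) - (1 - cos (2 * w * y)) / y) has_real_derivative
      2 * w * (sinc (2 * w * y) * (2 * w)) - (sin (2 * w * y) * (2 * w) * y - (1 - cos (2 * w * y))) / y^2) (at y)"
    using assms by (auto intro!: derivative_eq_intros DERIV_chain2[OF DERIV_Si] simp: power2_eq_square)
  moreover have "sinc (2 * w * y) = sin (2 * w * y) / (2 * w * y)"
    using assms by simp
  ultimately show ?thesis
    using assms by (simp add: field_simps power2_eq_square)
qed

lemma Si_primitive_tendsto_0: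
  fixes w :: real assumes "w > 0"
  shows "((\<lambda>y. 2 * w * Si (2 * w * y) - (1 - cos (2 * w * y)) / y) \<longlongrightarrow> 0) (at_right 0)"
proof -
  have "((\<lambda>y. Si (2 * w * y)) \<longlongrightarrow> Si 0) (at_right 0)"
    by (rule isCont_tendsto_compose[OF isCont_Si]) real_asymp
  moreover have "((\<lambda>y. (1 - cos (2 * w * y)) / y) \<longlongrightarrow> 0) (at_right 0)"
    by real_asymp
  ultimately have "((\<lambda>y. 2 * w * Si (2 * w * y) - (1 - cos (2 * w * y)) / y) \<longlongrightarrow> 2 * w * Si 0 - 0) (at_right 0)"
    by (intro tendsto_intros)
  moreover have "Si 0 = 0"
    by (simp add: Si_def zero_ereal_def)
  ultimately show ?thesis
    by simp
qed

lemma Si_primitive_tendsto_at_top: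
  fixes w :: real assumes "w > 0"
  shows "((\<lambda>y. 2 * w * Si (2 * w * y) - (1 - cos (2 * w * y)) / y) \<longlongrightarrow> pi * w) at_top"
proof -
  have "((\<lambda>y. Si (2 * w * y)) \<longlongrightarrow> pi / 2) at_top"
    by (rule filterlim_compose[OF Si_at_top]) (use assms in real_asymp)
  moreover have "((\<lambda>y. (1 - cos (2 * w * y)) / y) \<longlongrightarrow> 0) at_top"
  proof (rule Lim_null_comparison)
    show "\<forall>\<^sub>F y in at_top. norm ((1 - cos (2 * w * y)) / y) \<le> 2 / y"
      using eventually_gt_at_top[of 0]
      by eventually_elim (auto simp: abs_div intro!: divide_right_mono abs_leI
                           intro: order_trans[OF _ cos_ge_minus_one])
    show "((\<lambda>y::real. 2 / y) \<longlongrightarrow> 0) at_top"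
      by real_asymp
  qed
  ultimately have "((\<lambda>y. 2 * w * Si (2 * w * y) - (1 - cos (2 * w * y)) / y) \<longlongrightarrow> 2 * w * (pi / 2) - 0) at_top"
    by (intro tendsto_intros)
  then show ?thesis
    by (simp add: mult.commute)
qed

lemma one_minus_cos_div_square_integral_pos:
  fixes w :: real assumes "w > 0"
  shows "set_integrable lborel {0<..} (\<lambda>y. (1 - cos (2 * w * y)) / y^2)"
    and "(LBINT y:{0<..}. (1 - cos (2 * w * y)) / y^2) = pi * w"
proof -
  define F where "F y = 2 * w * Si (2 * w * y) - (1 - cos (2 * w * y)) / y" for y
  have "((F \<circ> real_of_ereal) \<longlongrightarrow> 0) (at_right 0)"
    using Si_primitive_tendsto_0[OF assms] by (simp add: F_def[abs_def] zero_ereal_def ereal_tendsto_simps)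
  moreover have "((F \<circ> real_of_ereal) \<longlongrightarrow> pi * w) (at_left \<infinity>)"
    using Si_primitive_tendsto_at_top[OF assms] by (simp add: F_def[abs_def] ereal_tendsto_simps)
  moreover have "DERIV F y :> (1 - cos (2 * w * y)) / y^2" if "0 < ereal y" for y
    using has_real_derivative_Si_primitive[OF assms] that by (simp add: F_def[abs_def] zero_ereal_def)
  moreover have "isCont (\<lambda>y. (1 - cos (2 * w * y)) / y^2) y" if "0 < ereal y" for y
    using that by (auto simp: zero_ereal_def intro!: continuous_intros)
  ultimately have "set_integrable lborel (einterval 0 \<infinity>) (\<lambda>y. (1 - cos (2 * w * y)) / y^2)"
    and "(LBINT y=0..\<infinity>. (1 - cos (2 * w * y)) / y^2) = pi * w - 0"
    by (intro interval_integral_FTC_nonneg[where F = F]; simp)+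
  then show "set_integrable lborel {0<..} (\<lambda>y. (1 - cos (2 * w * y)) / y^2)"
    and "(LBINT y:{0<..}. (1 - cos (2 * w * y)) / y^2) = pi * w"
    by (simp_all add: zero_ereal_def flip: interval_lebesgue_integral_0_infty)
qed

lemma one_minus_cos_div_square_integral:
  fixes u :: real
  shows "set_integrable lborel {0<..} (\<lambda>y. (1 - cos (2 * u * y)) / y^2)"
    and "(LBINT y:{0<..}. (1 - cos (2 * u * y)) / y^2) = pi * \<bar>u\<bar>"
proof -
  have even: "(\<lambda>y. (1 - cos (2 * u * y)) / y^2) = (\<lambda>y. (1 - cos (2 * \<bar>u\<bar> * y)) / y^2)"
    using cos_minus by (cases "u \<ge> 0") auto
  show "set_integrable lborel {0<..} (\<lambda>y. (1 - cos (2 * u * y)) / y^2)"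
  proof (cases "u = 0")
    case False
    then show ?thesis
      unfolding even by (intro one_minus_cos_div_square_integral_pos) auto
  qed (simp add: set_integrable_def)
  show "(LBINT y:{0<..}. (1 - cos (2 * u * y)) / y^2) = pi * \<bar>u\<bar>"
    unfolding even by (cases "u = 0") (auto intro: one_minus_cos_div_square_integral_pos)
qed

section \<open>Growth of the hyperbolic gamma function along horizontal lines\<close>

lemma borel_measurable_sinh_real [measurable]: "(sinh :: real \<Rightarrow> real) \<in> borel_measurable borel"
  unfolding sinh_def[abs_def] by measurable

lemma borel_measurable_cosh_real [measurable]: "(cosh :: real \<Rightarrow> real) \<in> borel_measurable borel"
  unfolding cosh_def[abs_def] by measurable

lemma hyperbolic_quotient_bigo_at_top:
  fixes ap am w c :: real and f :: "real \<Rightarrow> real"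
  assumes "ap > 0" "am > 0" "\<bar>w\<bar> < (ap + am) / 2" and f: "\<And>y. y > 0 \<Longrightarrow> \<bar>f y\<bar> \<le> exp (2 * \<bar>w\<bar> * y)"
  shows "(\<lambda>y. f y / (2 * sinh (ap * y) * sinh (am * y) * y) - c / (ap * am * y^2)) \<in> O(\<lambda>y. 1 / y^2)"
proof (rule sum_in_bigo(2))
  define d where "d = ap + am - 2 * \<bar>w\<bar>"
  have "d > 0" using assms by (simp add: d_def)
  have "(\<lambda>y. f y / (2 * sinh (ap * y) * sinh (am * y) * y))
      \<in> O(\<lambda>y. exp (- d * y) * exp (ap * y) * exp (am * y) / (sinh (ap * y) * sinh (am * y) * y))"
  proof (rule bigoI[where c = 1])
    have "\<bar>f y / (2 * sinh (ap * y) * sinh (am * y) * y)\<bar>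
        \<le> \<bar>exp (- d * y) * exp (ap * y) * exp (am * y) / (sinh (ap * y) * sinh (am * y) * y)\<bar>" if "y > 0" for y
    proof -
      have "exp (- d * y) * exp (ap * y) * exp (am * y) = exp (2 * \<bar>w\<bar> * y)"
        by (simp add: d_def flip: exp_add) (simp add: algebra_simps)
      moreover define D where "D = sinh (ap * y) * sinh (am * y) * y"
      moreover have "D > 0"
        using that assms by (simp add: D_def)
      moreover have "\<bar>f y\<bar> / (2 * D) \<le> exp (2 * \<bar>w\<bar> * y) / D"
        using f[OF that] \<open>D > 0\<close> by (intro frac_le) auto
      ultimately show ?thesis
        by (simp add: abs_div mult.assoc)
    qed
    then show "\<forall>\<^sub>F y in at_top. norm (f y / (2 * sinh (ap * y) * sinh (am * y) * y))
        \<le> 1 * norm (exp (- d * y) * exp (ap * y) * exp (am * y) / (sinh (ap * y) * sinh (am * y) * y))"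
      by (auto intro: eventually_mono[OF eventually_gt_at_top[of 0]])
  qed
  also have "(\<lambda>y. exp (- d * y) * exp (ap * y) * exp (am * y) / (sinh (ap * y) * sinh (am * y) * y)) \<in> O(\<lambda>y. 1 / y^2)"
    using assms \<open>d > 0\<close> by real_asymp
  finally show "(\<lambda>y. f y / (2 * sinh (ap * y) * sinh (am * y) * y)) \<in> O(\<lambda>y. 1 / y^2)" .
  show "(\<lambda>y. c / (ap * am * y^2)) \<in> O(\<lambda>y. 1 / y^2)"
    by (intro bigoI[where c = "\<bar>c\<bar> / (ap * am)"] always_eventually allI) (use assms in \<open>simp add: abs_mult abs_div\<close>)
qed

lemma cosh_le_exp_abs: "cosh (t :: real) \<le> exp \<bar>t\<bar>"
  by (cases "t \<ge> 0") (auto simp: cosh_def)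

lemma abs_sinh_le_exp_abs: "\<bar>sinh (t :: real)\<bar> \<le> exp \<bar>t\<bar>"
  using sinh_le_cosh_real[of t] sinh_le_cosh_real[of "- t"] cosh_le_exp_abs[of t] by (simp add: abs_le_iff)

text \<open>The imaginary part of the integrand of hgamma on the imaginary axis.\<close>
definition sinh_integrand :: "real \<Rightarrow> real \<Rightarrow> real \<Rightarrow> real \<Rightarrow> real" where
  "sinh_integrand ap am w y = sinh (2 * y * w) / (2 * sinh (ap * y) * sinh (am * y) * y) - w / (ap * am * y^2)"

lemma borel_measurable_sinh_integrand [measurable]: "sinh_integrand ap am w \<in> borel_measurable borel"
  unfolding sinh_integrand_def[abs_def] by measurable

context
  fixes ap am w :: real
  assumes ap: "ap > 0" and am: "am > 0" and w_bound: "\<bar>w\<bar> < (ap + am) / 2"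
begin

lemma set_integrable_sin_cosh_integrand:
  "set_integrable lborel {0<..}
     (\<lambda>y. sin (2 * y * u) * cosh (2 * y * w) / (2 * sinh (ap * y) * sinh (am * y) * y) - u / (ap * am * y^2))"
proof (rule set_integrable_Ioi_bigo)
  show "continuous_on {0<..} (\<lambda>y. sin (2 * y * u) * cosh (2 * y * w) / (2 * sinh (ap * y) * sinh (am * y) * y) - u / (ap * am * y^2))"
    using ap am by (auto intro!: continuous_intros)
  show "(\<lambda>y. sin (2 * y * u) * cosh (2 * y * w) / (2 * sinh (ap * y) * sinh (am * y) * y) - u / (ap * am * y^2))
      \<in> O[at_right 0](\<lambda>_. 1)"
    using ap am by real_asymp
  have "\<bar>sin (2 * y * u) * cosh (2 * y * w)\<bar> \<le> exp (2 * \<bar>w\<bar> * y)" if "y > 0" for y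
  proof -
    have "\<bar>sin (2 * y * u) * cosh (2 * y * w)\<bar> \<le> cosh (2 * y * w)"
      by (simp add: abs_mult mult_left_le_one_le)
    also have "\<dots> \<le> exp (2 * \<bar>w\<bar> * y)"
      using cosh_le_exp_abs[of "2 * y * w"] that by (simp add: abs_mult mult_ac)
    finally show ?thesis .
  qed
  then show "(\<lambda>y. sin (2 * y * u) * cosh (2 * y * w) / (2 * sinh (ap * y) * sinh (am * y) * y) - u / (ap * am * y^2))
      \<in> O(\<lambda>y. 1 / y^2)"
    by (rule hyperbolic_quotient_bigo_at_top[OF ap am w_bound])
qed measurable

lemma set_integrable_sinh_integrand: "set_integrable lborel {0<..} (sinh_integrand ap am w)"
  unfolding sinh_integrand_def[abs_def]
proof (rule set_integrable_Ioi_bigo)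
  show "continuous_on {0<..} (\<lambda>y. sinh (2 * y * w) / (2 * sinh (ap * y) * sinh (am * y) * y) - w / (ap * am * y^2))"
    using ap am by (auto intro!: continuous_intros)
  show "(\<lambda>y. sinh (2 * y * w) / (2 * sinh (ap * y) * sinh (am * y) * y) - w / (ap * am * y^2)) \<in> O[at_right 0](\<lambda>_. 1)"
    using ap am by real_asymp
  have "\<bar>sinh (2 * y * w)\<bar> \<le> exp (2 * \<bar>w\<bar> * y)" if "y > 0" for y
    using abs_sinh_le_exp_abs[of "2 * y * w"] that by (simp add: abs_mult mult_ac)
  then show "(\<lambda>y. sinh (2 * y * w) / (2 * sinh (ap * y) * sinh (am * y) * y) - w / (ap * am * y^2)) \<in> O(\<lambda>y. 1 / y^2)"
    by (rule hyperbolic_quotient_bigo_at_top[OF ap am w_bound])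
qed measurable

end

lemma Im_set_lebesgue_integral:
  fixes f :: "'a \<Rightarrow> complex"
  assumes "set_integrable M A f"
  shows "Im (LINT x:A|M. f x) = (LINT x:A|M. Im (f x))"
  using integral_Im[OF assms[unfolded set_integrable_def]] by (simp add: set_lebesgue_integral_def)

definition hgamma_integrand :: "real \<Rightarrow> real \<Rightarrow> complex \<Rightarrow> real \<Rightarrow> complex" where
  "hgamma_integrand ap am z y = (sin (2 * complex_of_real y * z) / complex_of_real (2 * sinh (ap * y) * sinh (am * y))
       - z / complex_of_real (ap * am * y)) / complex_of_real y"

lemma hgamma_eq_exp_integral: "hgamma ap am z = exp (\<i> * (LINT y:{0<..}|lborel. hgamma_integrand ap am z y))"
  unfolding hgamma_def hgamma_integrand_def ..

context
  fixes ap am :: real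
  assumes ap: "ap > 0" and am: "am > 0"
begin

lemma Re_hgamma_integrand:
  assumes "y > 0"
  shows "Re (hgamma_integrand ap am (Complex u w) y)
    = sin (2 * y * u) * cosh (2 * y * w) / (2 * sinh (ap * y) * sinh (am * y) * y) - u / (ap * am * y^2)"
  using assms ap am by (simp add: hgamma_integrand_def Re_sin cosh_def field_simps power2_eq_square)

text \<open>The integral of the first term is bounded uniformly in u; the integral of the second one
  is computed exactly and gives the exponential growth of hgamma.\<close>
lemma Im_hgamma_integrand:
  assumes "y > 0"
  shows "Im (hgamma_integrand ap am (Complex u w) y)
    = cos (2 * y * u) * sinh_integrand ap am w y
      - w / (ap * am) * ((1 - cos (2 * u * y)) / y^2)"
proof -
  have "Im (sin (2 * complex_of_real y * Complex u w)) = cos (2 * y * u) * sinh (2 * y * w)"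
    by (simp add: Im_sin sinh_def)
  then have "Im (hgamma_integrand ap am (Complex u w) y)
      = (cos (2 * y * u) * sinh (2 * y * w) / (2 * sinh (ap * y) * sinh (am * y)) - w / (ap * am * y)) / y"
    by (simp add: hgamma_integrand_def mult.assoc)
  also have "\<dots> = cos (2 * y * u) * sinh_integrand ap am w y
      - w / (ap * am) * ((1 - cos (2 * u * y)) / y^2)"
    using assms ap am by (simp add: sinh_integrand_def field_simps power2_eq_square mult.commute[of u y])
  finally show ?thesis .
qed

context
  fixes w :: real
  assumes w_bound: "\<bar>w\<bar> < (ap + am) / 2"
begin

lemma set_integrable_cos_sinh_integrand:
  "set_integrable lborel {0<..}
     (\<lambda>y. cos (2 * y * u) * sinh_integrand ap am w y)"
  by (rule set_integrable_bound[OF set_integrable_abs[OF set_integrable_sinh_integrand[OF ap am w_bound]]])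
     (auto simp: set_borel_measurable_def abs_mult intro!: mult_left_le_one_le)

lemma set_integrable_hgamma_integrand:
  "set_integrable lborel {0<..} (hgamma_integrand ap am (Complex u w))"
proof (rule set_integrable_bound)
  show "set_integrable lborel {0<..} (\<lambda>y. \<bar>Re (hgamma_integrand ap am (Complex u w) y)\<bar> + \<bar>Im (hgamma_integrand ap am (Complex u w) y)\<bar>)"
  proof (intro set_integral_add set_integrable_abs)
    show "set_integrable lborel {0<..} (\<lambda>y. Re (hgamma_integrand ap am (Complex u w) y))"
      by (rule set_integrable_cong[OF refl refl, THEN iffD2, OF _ set_integrable_sin_cosh_integrand[OF ap am w_bound]])
         (simp add: Re_hgamma_integrand)
    show "set_integrable lborel {0<..} (\<lambda>y. Im (hgamma_integrand ap am (Complex u w) y))"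
      by (rule set_integrable_cong[OF refl refl, THEN iffD2,
            OF _ set_integral_diff(1)[OF set_integrable_cos_sinh_integrand[of u]
              set_integrable_mult_right[OF one_minus_cos_div_square_integral(1)[of u], of "w / (ap * am)"]]])
         (simp add: Im_hgamma_integrand)
  qed
  show "AE y in lborel. y \<in> {0<..} \<longrightarrow> norm (hgamma_integrand ap am (Complex u w) y)
      \<le> norm (\<bar>Re (hgamma_integrand ap am (Complex u w) y)\<bar> + \<bar>Im (hgamma_integrand ap am (Complex u w) y)\<bar>)"
    by (auto intro: order_trans[OF cmod_le])
qed (auto simp: set_borel_measurable_def hgamma_integrand_def)

lemma norm_hgamma_eq:
  "cmod (hgamma ap am (Complex u w)) = exp (pi * w * \<bar>u\<bar> / (ap * am)
     - (LINT y:{0<..}|lborel. cos (2 * y * u) * sinh_integrand ap am w y))"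
proof -
  have "Im (LINT y:{0<..}|lborel. hgamma_integrand ap am (Complex u w) y)
      = (LINT y:{0<..}|lborel. cos (2 * y * u) * sinh_integrand ap am w y
          - w / (ap * am) * ((1 - cos (2 * u * y)) / y^2))"
    unfolding Im_set_lebesgue_integral[OF set_integrable_hgamma_integrand]
    by (rule set_lebesgue_integral_cong) (auto simp: Im_hgamma_integrand)
  also have "\<dots> = (LINT y:{0<..}|lborel. cos (2 * y * u) * sinh_integrand ap am w y)
      - pi * w * \<bar>u\<bar> / (ap * am)"
    by (subst set_integral_diff(2)[OF set_integrable_cos_sinh_integrand
          set_integrable_mult_right[OF one_minus_cos_div_square_integral(1)]])
       (simp only: set_integral_mult_right one_minus_cos_div_square_integral(2), simp)
  finally show ?thesis
    by (simp add: hgamma_eq_exp_integral)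
qed

lemma norm_hgamma_bounds:
  obtains M where "\<And>u. cmod (hgamma ap am (Complex u w)) \<le> exp (pi * w * \<bar>u\<bar> / (ap * am) + M)"
    and "\<And>u. exp (pi * w * \<bar>u\<bar> / (ap * am) - M) \<le> cmod (hgamma ap am (Complex u w))"
proof
  define M where "M = (LINT y:{0<..}|lborel. \<bar>sinh_integrand ap am w y\<bar>)"
  have "\<bar>LINT y:{0<..}|lborel. cos (2 * y * u) * sinh_integrand ap am w y\<bar> \<le> M" for u
  proof -
    have "\<bar>LINT y:{0<..}|lborel. cos (2 * y * u) * sinh_integrand ap am w y\<bar> \<le> (LINT y:{0<..}|lborel. \<bar>cos (2 * y * u) * sinh_integrand ap am w y\<bar>)"
      using set_integral_norm_bound[OF set_integrable_cos_sinh_integrand[of u]] by simp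
    also have "\<dots> \<le> M"
      unfolding M_def using set_integrable_cos_sinh_integrand[of u] set_integrable_sinh_integrand[OF ap am w_bound]
      by (intro set_integral_mono set_integrable_abs)
         (auto simp: abs_mult intro!: mult_left_le_one_le)
    finally show ?thesis .
  qed
  moreover have "cmod (hgamma ap am (Complex u w))
      = exp (pi * w * \<bar>u\<bar> / (ap * am) - (LINT y:{0<..}|lborel. cos (2 * y * u) * sinh_integrand ap am w y))" for u
    using norm_hgamma_eq by simp
  ultimately show "cmod (hgamma ap am (Complex u w)) \<le> exp (pi * w * \<bar>u\<bar> / (ap * am) + M)"
    and "exp (pi * w * \<bar>u\<bar> / (ap * am) - M) \<le> cmod (hgamma ap am (Complex u w))" for u
    by (auto simp: abs_le_iff)
qed

end

end

lemma norm_hgammaR: "cmod (hgammaR ap am z) = cmod (hgamma ap am z) * exp (- (pi * Re z * Im z / (ap * am)))"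
  unfolding hgammaR_def norm_mult norm_exp_eq_Re by (simp add: power2_eq_square algebra_simps)

lemma norm_hgammaL: "cmod (hgammaL ap am z) = cmod (hgamma ap am z) * exp (pi * Re z * Im z / (ap * am))"
  unfolding hgammaL_def norm_mult norm_exp_eq_Re by (simp add: power2_eq_square algebra_simps)

lemma norm_hgammaR_div_hgammaL_le:
  fixes ap am w1 w2 :: real
  assumes ap: "ap > 0" and am: "am > 0"
    and w1: "w1 < 0" "\<bar>w1\<bar> < (ap + am) / 2" and w2: "w2 > 0" "\<bar>w2\<bar> < (ap + am) / 2"
  obtains C \<gamma> where "C > 0" "\<gamma> > 0"
    and "\<And>s t. cmod (hgammaR ap am (Complex s w1) / hgammaL ap am (Complex t w2))
           \<le> C * exp (- \<gamma> * (max (- s) 0 + max t 0))"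
proof -
  obtain M1 where M1: "\<And>s. cmod (hgamma ap am (Complex s w1)) \<le> exp (pi * w1 * \<bar>s\<bar> / (ap * am) + M1)"
    and "\<And>s. exp (pi * w1 * \<bar>s\<bar> / (ap * am) - M1) \<le> cmod (hgamma ap am (Complex s w1))"
    using norm_hgamma_bounds[OF ap am w1(2)] by metis
  obtain M2 where "\<And>t. cmod (hgamma ap am (Complex t w2)) \<le> exp (pi * w2 * \<bar>t\<bar> / (ap * am) + M2)"
    and M2: "\<And>t. exp (pi * w2 * \<bar>t\<bar> / (ap * am) - M2) \<le> cmod (hgamma ap am (Complex t w2))"
    using norm_hgamma_bounds[OF ap am w2(2)] by metis
  define \<gamma> where "\<gamma> = 2 * pi * min (- w1) w2 / (ap * am)"
  have "ap * am > 0" using ap am by simp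
  then have \<gamma>_le: "\<gamma> \<le> 2 * pi * (- w1) / (ap * am)" "\<gamma> \<le> 2 * pi * w2 / (ap * am)"
    unfolding \<gamma>_def by (intro divide_right_mono mult_left_mono; simp)+
  have "cmod (hgammaR ap am (Complex s w1) / hgammaL ap am (Complex t w2))
      \<le> exp (M1 + M2) * exp (- \<gamma> * (max (- s) 0 + max t 0))" for s t
  proof -
    have "cmod (hgammaR ap am (Complex s w1)) \<le> exp (pi * w1 * \<bar>s\<bar> / (ap * am) + M1) * exp (- (pi * s * w1 / (ap * am)))"
      unfolding norm_hgammaR complex.sel using M1[of s] by (rule mult_right_mono) simp
    also have "\<dots> = exp (M1 - (2 * pi * (- w1) / (ap * am)) * max (- s) 0)"
      unfolding exp_add[symmetric] by (rule arg_cong[where f = exp]) (simp add: max_def abs_if field_simps)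
    also have "\<dots> \<le> exp (M1 - \<gamma> * max (- s) 0)"
      using mult_right_mono[OF \<gamma>_le(1), of "max (- s) 0"] by (simp only: exp_le_cancel_iff) linarith
    finally have upper: "cmod (hgammaR ap am (Complex s w1)) \<le> exp (M1 - \<gamma> * max (- s) 0)" .
    have "exp (\<gamma> * max t 0 - M2) \<le> exp ((2 * pi * w2 / (ap * am)) * max t 0 - M2)"
      using mult_right_mono[OF \<gamma>_le(2), of "max t 0"] by (simp only: exp_le_cancel_iff) linarith
    also have "\<dots> = exp (pi * w2 * \<bar>t\<bar> / (ap * am) - M2) * exp (pi * t * w2 / (ap * am))"
      unfolding exp_add[symmetric] by (rule arg_cong[where f = exp]) (simp add: max_def abs_if field_simps)
    also have "\<dots> \<le> cmod (hgammaL ap am (Complex t w2))"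
      unfolding norm_hgammaL complex.sel using M2[of t] by (rule mult_right_mono) simp
    finally have lower: "exp (\<gamma> * max t 0 - M2) \<le> cmod (hgammaL ap am (Complex t w2))" .
    have "cmod (hgammaR ap am (Complex s w1) / hgammaL ap am (Complex t w2))
        \<le> exp (M1 - \<gamma> * max (- s) 0) / exp (\<gamma> * max t 0 - M2)"
      unfolding norm_divide by (rule frac_le[OF _ upper _ lower]) simp_all
    also have "\<dots> = exp (M1 + M2) * exp (- \<gamma> * (max (- s) 0 + max t 0))"
      unfolding exp_diff[symmetric] exp_add[symmetric] by (rule arg_cong[where f = exp]) (simp add: algebra_simps)
    finally show ?thesis .
  qed
  moreover have "\<gamma> > 0"
    using w1 w2 \<open>ap * am > 0\<close> by (simp add: \<gamma>_def)
  ultimately show ?thesis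
    using that[of "exp (M1 + M2)" \<gamma>] by auto
qed

section \<open>Exponential decay of the kernel\<close>

lemma cyclic_chain_le:
  fixes x d :: "nat \<Rightarrow> real"
  assumes step: "\<And>n. n < N \<Longrightarrow> x ((n + 1) mod N) \<le> x n + d n"
    and "i \<le> j" "j \<le> N" "i < N"
  shows "x (j mod N) \<le> x i + (\<Sum>n\<in>{i..<j}. d n)"
  using \<open>i \<le> j\<close> \<open>j \<le> N\<close>
proof (induction j rule: dec_induct)
  case base
  then show ?case using \<open>i < N\<close> by simp
next
  case (step j)
  then have "x (Suc j mod N) \<le> x j + d j"
    using assms(1)[of j] by simp
  then show ?case
    using step by simp
qed

lemma cyclic_oscillation_le:
  fixes x d :: "nat \<Rightarrow> real"
  assumes step: "\<And>n. n < N \<Longrightarrow> x ((n + 1) mod N) \<le> x n + d n"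
    and d_nonneg: "\<And>n. d n \<ge> 0" and "i < N" "j < N"
  shows "x j - x i \<le> (\<Sum>n<N. d n)"
proof (cases "i \<le> j")
  case True
  have "x j \<le> x i + (\<Sum>n\<in>{i..<j}. d n)"
    using cyclic_chain_le[where x = x and d = d, OF step True] \<open>j < N\<close> \<open>i < N\<close> by simp
  also have "(\<Sum>n\<in>{i..<j}. d n) \<le> (\<Sum>n<N. d n)"
    using \<open>j < N\<close> d_nonneg by (intro sum_mono2) auto
  finally show ?thesis by simp
next
  case False
  have "x 0 \<le> x i + (\<Sum>n\<in>{i..<N}. d n)"
    using cyclic_chain_le[where x = x and d = d and i = i and j = N, OF step] \<open>i < N\<close> by simp
  moreover have "x j \<le> x 0 + (\<Sum>n\<in>{0..<j}. d n)"
    using cyclic_chain_le[where x = x and d = d and i = 0 and j = j, OF step] \<open>j < N\<close> by simp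
  moreover have "(\<Sum>n\<in>{0..<j}. d n) + (\<Sum>n\<in>{i..<N}. d n) = (\<Sum>n\<in>{0..<j} \<union> {i..<N}. d n)"
    using False by (intro sum.union_disjoint[symmetric]) auto
  moreover have "\<dots> \<le> (\<Sum>n<N. d n)"
    using d_nonneg \<open>j < N\<close> by (intro sum_mono2) auto
  ultimately show ?thesis by linarith
qed

text \<open>The exponent of the kernel bound controls the l1-norm of (x, y) on the hyperplane.\<close>
lemma cyclic_sum_abs_le:
  fixes x y :: "nat \<Rightarrow> real"
  assumes "N \<ge> 1" and sum_x: "(\<Sum>i<N. x i) = 0"
  shows "(\<Sum>i<N. \<bar>x i\<bar>) + (\<Sum>i<N. \<bar>y i\<bar>)
    \<le> 3 * N * (\<Sum>n<N. max (x ((n + 1) mod N) - y n) 0 + max (y n - x n) 0)"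
proof -
  define d where "d n = max (x ((n + 1) mod N) - y n) 0 + max (y n - x n) 0" for n
  define P where "P = (\<Sum>n<N. d n)"
  have d_nonneg: "d n \<ge> 0" for n
    by (simp add: d_def)
  have osc: "x j - x i \<le> P" if "i < N" "j < N" for i j
    unfolding P_def using that d_nonneg by (intro cyclic_oscillation_le) (auto simp: d_def)
  have x_bound: "\<bar>x i\<bar> \<le> P" if "i < N" for i
  proof -
    have "real N * x i = (\<Sum>j<N. x i - x j)" and "real N * (- x i) = (\<Sum>j<N. x j - x i)"
      using sum_x by (simp_all add: sum_subtractf)
    moreover have "(\<Sum>j<N. x i - x j) \<le> real N * P" and "(\<Sum>j<N. x j - x i) \<le> real N * P"
      using sum_mono[of "{..<N}" _ "\<lambda>_. P"] osc that by auto
    ultimately have "real N * x i \<le> real N * P" and "real N * (- x i) \<le> real N * P"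
      by linarith+
    moreover have "real N > 0"
      using \<open>N \<ge> 1\<close> by simp
    ultimately show ?thesis
      by (simp only: mult_le_cancel_left_pos abs_le_iff)
  qed
  have y_bound: "\<bar>y n\<bar> \<le> 2 * P" if "n < N" for n
  proof -
    have "d n \<le> P"
      unfolding P_def using that d_nonneg by (intro member_le_sum) auto
    moreover have "(n + 1) mod N < N"
      using that by simp
    ultimately show ?thesis
      using x_bound[OF that] x_bound[of "(n + 1) mod N"] by (auto simp: d_def abs_le_iff)
  qed
  have "(\<Sum>i<N. \<bar>x i\<bar>) + (\<Sum>i<N. \<bar>y i\<bar>) \<le> (\<Sum>i<N. P) + (\<Sum>i<N. 2 * P)"
    using x_bound y_bound by (intro add_mono sum_mono) auto
  then show ?thesis
    by (simp add: P_def d_def algebra_simps)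
qed

lemma kernelS_eq_prod:
  "kernelS ap am \<eta> N \<xi> x y =
    (\<Prod>n<N. hgammaR ap am (Complex (y n - x ((n + 1) mod N) + Re \<xi> - \<eta> / 2) (Im \<xi> - (ap + am) / 4))
           / hgammaL ap am (Complex (y n - x n + Re \<xi> + \<eta> / 2) (Im \<xi> + (ap + am) / 4)))"
  unfolding kernelS_def Let_def
  by (intro prod.cong refl arg_cong2[where f = "(/)"] arg_cong[where f = "hgammaR ap am"]
      arg_cong[where f = "hgammaL ap am"]) (simp_all add: complex_eq_iff)

lemma norm_kernelS_le_exp_sum:
  fixes ap am \<eta> C \<gamma> :: real and N :: nat and \<xi> :: complex
  assumes "C > 0" "\<gamma> > 0"
    and factor: "\<And>s t. cmod (hgammaR ap am (Complex s (Im \<xi> - (ap + am) / 4)) / hgammaL ap am (Complex t (Im \<xi> + (ap + am) / 4)))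
       \<le> C * exp (- \<gamma> * (max (- s) 0 + max t 0))"
  shows "cmod (kernelS ap am \<eta> N \<xi> x y) \<le> C ^ N * exp (\<gamma> * N * (\<bar>Re \<xi> - \<eta> / 2\<bar> + \<bar>Re \<xi> + \<eta> / 2\<bar>))
    * exp (- \<gamma> * (\<Sum>n<N. max (x ((n + 1) mod N) - y n) 0 + max (y n - x n) 0))"
proof -
  define c1 where "c1 = Re \<xi> - \<eta> / 2"
  define c2 where "c2 = Re \<xi> + \<eta> / 2"
  define c where "c = \<bar>c1\<bar> + \<bar>c2\<bar>"
  define d where "d n = max (x ((n + 1) mod N) - y n) 0 + max (y n - x n) 0" for n
  have kernel_eq: "kernelS ap am \<eta> N \<xi> x y
      = (\<Prod>n<N. hgammaR ap am (Complex (y n - x ((n + 1) mod N) + c1) (Im \<xi> - (ap + am) / 4))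
               / hgammaL ap am (Complex (y n - x n + c2) (Im \<xi> + (ap + am) / 4)))"
    by (simp add: kernelS_eq_prod c1_def c2_def add_diff_eq add.assoc)
  have "cmod (kernelS ap am \<eta> N \<xi> x y) \<le> (\<Prod>n<N. C * exp (- \<gamma> * (d n - c)))"
    unfolding kernel_eq prod_norm[symmetric]
  proof (intro prod_mono conjI norm_ge_zero order_trans[OF factor])
    fix n
    have "d n - c \<le> max (- (y n - x ((n + 1) mod N) + c1)) 0 + max (y n - x n + c2) 0"
      by (simp add: d_def c_def max_def abs_if)
    then show "C * exp (- \<gamma> * (max (- (y n - x ((n + 1) mod N) + c1)) 0 + max (y n - x n + c2) 0))
        \<le> C * exp (- \<gamma> * (d n - c))"
      using \<open>C > 0\<close> \<open>\<gamma> > 0\<close> by (intro mult_left_mono) auto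
  qed
  also have "\<dots> = C ^ N * exp (\<gamma> * N * c) * exp (- \<gamma> * (\<Sum>n<N. d n))"
    by (simp add: prod.distrib flip: exp_sum exp_add) (simp add: sum_distrib_left sum_subtractf algebra_simps)
  finally show ?thesis
    by (simp add: c_def c1_def c2_def d_def)
qed

lemma norm_kernelS_le:
  fixes ap am \<eta> :: real and N :: nat and \<xi> :: complex
  assumes ap: "ap > 0" and am: "am > 0" and "N \<ge> 1"
    and \<xi>: "\<bar>Im \<xi>\<bar> < (ap + am) / 2 / 2"
  obtains B \<delta> where "\<delta> > 0"
    and "\<And>x y. (\<Sum>i<N. x i) = 0 \<Longrightarrow>
      cmod (kernelS ap am \<eta> N \<xi> x y) \<le> B * exp (- \<delta> * ((\<Sum>i<N. \<bar>x i\<bar>) + (\<Sum>i<N. \<bar>y i\<bar>)))"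
proof -
  have "- (ap + am) / 4 < Im \<xi>" "Im \<xi> < (ap + am) / 4"
    using \<xi> unfolding abs_less_iff by linarith+
  then have "Im \<xi> - (ap + am) / 4 < 0" "\<bar>Im \<xi> - (ap + am) / 4\<bar> < (ap + am) / 2"
      "Im \<xi> + (ap + am) / 4 > 0" "\<bar>Im \<xi> + (ap + am) / 4\<bar> < (ap + am) / 2"
    using ap am unfolding abs_less_iff by linarith+
  then obtain C \<gamma> where "C > 0" "\<gamma> > 0" and factor:
    "\<And>s t. cmod (hgammaR ap am (Complex s (Im \<xi> - (ap + am) / 4)) / hgammaL ap am (Complex t (Im \<xi> + (ap + am) / 4)))
       \<le> C * exp (- \<gamma> * (max (- s) 0 + max t 0))"
    using norm_hgammaR_div_hgammaL_le[OF ap am] by metis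
  define B where "B = C ^ N * exp (\<gamma> * N * (\<bar>Re \<xi> - \<eta> / 2\<bar> + \<bar>Re \<xi> + \<eta> / 2\<bar>))"
  define \<delta> where "\<delta> = \<gamma> / (3 * N)"
  have "\<delta> > 0"
    using \<open>\<gamma> > 0\<close> \<open>N \<ge> 1\<close> by (simp add: \<delta>_def)
  have "cmod (kernelS ap am \<eta> N \<xi> x y) \<le> B * exp (- \<delta> * ((\<Sum>i<N. \<bar>x i\<bar>) + (\<Sum>i<N. \<bar>y i\<bar>)))"
    if sum_x: "(\<Sum>i<N. x i) = 0" for x y
  proof -
    define P where "P = (\<Sum>n<N. max (x ((n + 1) mod N) - y n) 0 + max (y n - x n) 0)"
    have "\<delta> * ((\<Sum>i<N. \<bar>x i\<bar>) + (\<Sum>i<N. \<bar>y i\<bar>)) \<le> \<delta> * (3 * N * P)"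
      using cyclic_sum_abs_le[OF \<open>N \<ge> 1\<close> sum_x, of y] \<open>\<delta> > 0\<close> by (simp add: P_def)
    also have "\<dots> = \<gamma> * P"
      using \<open>N \<ge> 1\<close> by (simp add: \<delta>_def)
    finally have "exp (- \<gamma> * P) \<le> exp (- \<delta> * ((\<Sum>i<N. \<bar>x i\<bar>) + (\<Sum>i<N. \<bar>y i\<bar>)))"
      by simp
    then show ?thesis
      using norm_kernelS_le_exp_sum[OF \<open>C > 0\<close> \<open>\<gamma> > 0\<close> factor, of \<eta> N x y] \<open>C > 0\<close>
      unfolding B_def P_def[symmetric] by (auto intro: order_trans mult_left_mono)
  qed
  then show ?thesis
    using that \<open>\<delta> > 0\<close> by blast
qed

section \<open>Hilbert--Schmidt integral operators\<close>

lemma square_integrable_measurable [measurable_dest]: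
  "square_integrable M f \<Longrightarrow> f \<in> borel_measurable M"
  by (simp add: square_integrable_def)

lemma integrable_mult_square_integrable:
  assumes "square_integrable M f" "square_integrable M g"
  shows "integrable M (\<lambda>x. f x * g x)"
proof (rule Bochner_Integration.integrable_bound)
  show "integrable M (\<lambda>x. (cmod (f x))\<^sup>2 + (cmod (g x))\<^sup>2)"
    using assms by (auto simp: square_integrable_def)
  have "cmod (f x) * cmod (g x) \<le> (cmod (f x))\<^sup>2 + (cmod (g x))\<^sup>2" for x
    using sum_squares_bound[of "cmod (f x)" "cmod (g x)"] mult_nonneg_nonneg[OF norm_ge_zero norm_ge_zero, of "f x" "g x"]
    by linarith
  then show "AE x in M. norm (f x * g x) \<le> norm ((cmod (f x))\<^sup>2 + (cmod (g x))\<^sup>2)"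
    by (simp add: norm_mult)
qed (use assms in measurable)

lemma borel_measurable_cnj [measurable]: "(cnj :: complex \<Rightarrow> complex) \<in> borel_measurable borel"
  by (intro borel_measurable_continuous_onI continuous_on_cnj continuous_on_id)

lemma square_integrable_cnj:
  assumes "square_integrable M f"
  shows "square_integrable M (\<lambda>x. cnj (f x))"
  using assms by (simp add: square_integrable_def; measurable)

lemma square_integrable_mult_left:
  assumes "square_integrable M f"
  shows "square_integrable M (\<lambda>x. c * f x)"
  using assms by (simp add: square_integrable_def norm_mult power_mult_distrib; measurable)

lemma square_integrable_add:
  assumes "square_integrable M f" "square_integrable M g"
  shows "square_integrable M (\<lambda>x. f x + g x)"
proof -
  have "integrable M (\<lambda>x. (cmod (f x + g x))\<^sup>2)"
  proof (rule Bochner_Integration.integrable_bound)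
    show "integrable M (\<lambda>x. 2 * (cmod (f x))\<^sup>2 + 2 * (cmod (g x))\<^sup>2)"
      using assms by (auto simp: square_integrable_def)
    have "(cmod (f x + g x))\<^sup>2 \<le> 2 * (cmod (f x))\<^sup>2 + 2 * (cmod (g x))\<^sup>2" for x
    proof -
      have "(cmod (f x + g x))\<^sup>2 \<le> (cmod (f x) + cmod (g x))\<^sup>2"
        by (intro power_mono norm_triangle_ineq) simp
      also have "\<dots> \<le> 2 * (cmod (f x))\<^sup>2 + 2 * (cmod (g x))\<^sup>2"
        using sum_squares_bound[of "cmod (f x)" "cmod (g x)"] by (simp add: power2_sum)
      finally show ?thesis .
    qed
    then show "AE x in M. norm ((cmod (f x + g x))\<^sup>2) \<le> norm (2 * (cmod (f x))\<^sup>2 + 2 * (cmod (g x))\<^sup>2)"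
      by simp
  qed (use assms in measurable)
  then show ?thesis
    using assms by (simp add: square_integrable_def; measurable)
qed

lemma square_integrable_diff:
  "square_integrable M f \<Longrightarrow> square_integrable M g \<Longrightarrow> square_integrable M (\<lambda>x. f x - g x)"
  using square_integrable_add[of M f "\<lambda>x. (- 1) * g x"] square_integrable_mult_left[of M g "- 1"] by simp

lemma square_integrable_sum:
  "(\<And>i. i \<in> I \<Longrightarrow> square_integrable M (f i)) \<Longrightarrow> square_integrable M (\<lambda>x. \<Sum>i\<in>I. f i x)"
proof (induction I rule: infinite_finite_induct)
  case (insert i I)
  then show ?case
    using square_integrable_add[of M "f i" "\<lambda>x. \<Sum>i\<in>I. f i x"] by simp
qed (simp_all add: square_integrable_def)

definition L2_inner :: "'a measure \<Rightarrow> ('a \<Rightarrow> complex) \<Rightarrow> ('a \<Rightarrow> complex) \<Rightarrow> complex" where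
  "L2_inner M f g = (LINT x|M. f x * cnj (g x))"

lemma L2_inner_commute: "L2_inner M g f = cnj (L2_inner M f g)"
  unfolding L2_inner_def Bochner_Integration.integral_cnj[symmetric] by (simp add: mult.commute)

lemma L2_inner_self: "L2_inner M f f = complex_of_real (LINT x|M. (cmod (f x))\<^sup>2)"
  unfolding L2_inner_def integral_complex_of_real[symmetric] complex_norm_square ..

lemma L2_inner_diff_left:
  "square_integrable M f \<Longrightarrow> square_integrable M g \<Longrightarrow> square_integrable M h \<Longrightarrow>
    L2_inner M (\<lambda>x. f x - g x) h = L2_inner M f h - L2_inner M g h"
  unfolding L2_inner_def
  by (simp add: left_diff_distrib integrable_mult_square_integrable square_integrable_cnj)

lemma L2_inner_diff_right:
  "square_integrable M f \<Longrightarrow> square_integrable M g \<Longrightarrow> square_integrable M h \<Longrightarrow>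
    L2_inner M h (\<lambda>x. f x - g x) = L2_inner M h f - L2_inner M h g"
  by (subst (1 2 3) L2_inner_commute) (simp add: L2_inner_diff_left)

lemma L2_inner_sum_left:
  assumes "\<And>i. i \<in> I \<Longrightarrow> square_integrable M (f i)" "square_integrable M h"
  shows "L2_inner M (\<lambda>x. \<Sum>i\<in>I. a i * f i x) h = (\<Sum>i\<in>I. a i * L2_inner M (f i) h)"
proof -
  have "(\<lambda>x. (\<Sum>i\<in>I. a i * f i x) * cnj (h x)) = (\<lambda>x. \<Sum>i\<in>I. a i * (f i x * cnj (h x)))"
    by (simp add: sum_distrib_right mult.assoc)
  then show ?thesis
    using assms by (simp add: L2_inner_def integrable_mult_square_integrable square_integrable_cnj)
qed

lemma L2_inner_sum_right:
  "(\<And>i. i \<in> I \<Longrightarrow> square_integrable M (f i)) \<Longrightarrow> square_integrable M h \<Longrightarrow>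
    L2_inner M h (\<lambda>x. \<Sum>i\<in>I. a i * f i x) = (\<Sum>i\<in>I. cnj (a i) * L2_inner M h (f i))"
  by (subst (1 2) L2_inner_commute) (simp add: L2_inner_sum_left L2_inner_commute[of M h])

lemma L2_inner_sum_orthonormal:
  fixes f :: "nat \<Rightarrow> 'a \<Rightarrow> complex"
  assumes f: "\<And>i. i < n \<Longrightarrow> square_integrable M (f i)"
    and orthonormal: "\<And>i j. i < n \<Longrightarrow> j < n \<Longrightarrow> L2_inner M (f i) (f j) = (if i = j then 1 else 0)"
  shows "L2_inner M (\<lambda>x. \<Sum>i<n. a i * f i x) (\<lambda>x. \<Sum>i<n. b i * f i x) = (\<Sum>i<n. a i * cnj (b i))"
proof -
  have "square_integrable M (\<lambda>x. \<Sum>j<n. b j * f j x)"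
    using f by (intro square_integrable_sum square_integrable_mult_left) auto
  then have "L2_inner M (\<lambda>x. \<Sum>i<n. a i * f i x) (\<lambda>x. \<Sum>i<n. b i * f i x)
      = (\<Sum>i<n. a i * L2_inner M (f i) (\<lambda>x. \<Sum>j<n. b j * f j x))"
    using f by (intro L2_inner_sum_left) auto
  also have "\<dots> = (\<Sum>i<n. a i * (\<Sum>j<n. cnj (b j) * L2_inner M (f i) (f j)))"
    using f by (intro sum.cong refl arg_cong[where f = "times _"] L2_inner_sum_right) auto
  also have "\<dots> = (\<Sum>i<n. a i * cnj (b i))"
  proof (intro sum.cong refl arg_cong[where f = "times _"])
    fix i assume "i \<in> {..<n}"
    then have "(\<Sum>j<n. cnj (b j) * L2_inner M (f i) (f j)) = (\<Sum>j<n. if i = j then cnj (b j) else 0)"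
      using orthonormal by (intro sum.cong) auto
    also have "\<dots> = cnj (b i)"
      using \<open>i \<in> {..<n}\<close> by simp
    finally show "(\<Sum>j<n. cnj (b j) * L2_inner M (f i) (f j)) = cnj (b i)" .
  qed
  finally show ?thesis .
qed

text \<open>The integral of k * e i is the inner product of k with cnj (e i), and the conjugates
  cnj (e i) are again orthonormal.\<close>
lemma bessel_inequality:
  fixes k :: "'a \<Rightarrow> complex" and e :: "nat \<Rightarrow> 'a \<Rightarrow> complex"
  assumes k: "square_integrable M k" and e: "\<And>i. i < n \<Longrightarrow> square_integrable M (e i)"
    and orthonormal: "\<And>i j. i < n \<Longrightarrow> j < n \<Longrightarrow> (LINT x|M. e i x * cnj (e j x)) = (if i = j then 1 else 0)"
  shows "(\<Sum>i<n. (cmod (LINT y|M. k y * e i y))\<^sup>2) \<le> (LINT y|M. (cmod (k y))\<^sup>2)"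
proof -
  define f where "f i y = cnj (e i y)" for i y
  define c where "c i = L2_inner M k (f i)" for i
  define S where "S y = (\<Sum>i<n. c i * f i y)" for y
  have f: "square_integrable M (f i)" if "i < n" for i
    unfolding f_def using e[OF that] by (rule square_integrable_cnj)
  have "L2_inner M (f i) (f j) = (if i = j then 1 else 0)" if "i < n" "j < n" for i j
    using orthonormal[OF that(2,1)] by (simp add: L2_inner_def f_def mult.commute)
  then have SS: "L2_inner M S S = (\<Sum>i<n. complex_of_real ((cmod (c i))\<^sup>2))"
    unfolding S_def using f by (simp add: L2_inner_sum_orthonormal flip: complex_norm_square)
  have "L2_inner M k S = (\<Sum>i<n. cnj (c i) * c i)"
    using L2_inner_sum_right[of "{..<n}" M f k c] f k by (simp add: S_def[abs_def] c_def)
  also have "\<dots> = (\<Sum>i<n. complex_of_real ((cmod (c i))\<^sup>2))"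
    by (intro sum.cong refl) (simp only: complex_norm_square mult.commute)
  finally have kS: "L2_inner M k S = (\<Sum>i<n. complex_of_real ((cmod (c i))\<^sup>2))" .
  have S: "square_integrable M S"
    unfolding S_def using f by (intro square_integrable_sum square_integrable_mult_left) auto
  have "complex_of_real (LINT y|M. (cmod (k y - S y))\<^sup>2) = L2_inner M (\<lambda>y. k y - S y) (\<lambda>y. k y - S y)"
    by (rule L2_inner_self[symmetric])
  also have "\<dots> = L2_inner M k (\<lambda>y. k y - S y) - L2_inner M S (\<lambda>y. k y - S y)"
    by (rule L2_inner_diff_left[OF k S square_integrable_diff[OF k S]])
  also have "\<dots> = L2_inner M k k - L2_inner M k S - L2_inner M S k + L2_inner M S S"
    unfolding L2_inner_diff_right[OF k S k] L2_inner_diff_right[OF k S S] by simp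
  also have "\<dots> = complex_of_real ((LINT y|M. (cmod (k y))\<^sup>2) - (\<Sum>i<n. (cmod (c i))\<^sup>2))"
    using kS SS by (subst L2_inner_commute[of M S k]) (simp add: L2_inner_self)
  finally have "(LINT y|M. (cmod (k y - S y))\<^sup>2) = (LINT y|M. (cmod (k y))\<^sup>2) - (\<Sum>i<n. (cmod (c i))\<^sup>2)"
    using of_real_eq_iff by blast
  moreover have "(LINT y|M. (cmod (k y - S y))\<^sup>2) \<ge> 0"
    by simp
  ultimately have "(\<Sum>i<n. (cmod (c i))\<^sup>2) \<le> (LINT y|M. (cmod (k y))\<^sup>2)"
    by linarith
  moreover have "c i = (LINT y|M. k y * e i y)" for i
    by (simp add: c_def L2_inner_def f_def)
  ultimately show ?thesis
    by simp
qed

context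
  fixes M :: "'a measure" and K :: "'a \<Rightarrow> 'a \<Rightarrow> complex"
  assumes sigma_finite: "sigma_finite_measure M"
    and K_measurable [measurable]: "case_prod K \<in> borel_measurable (M \<Otimes>\<^sub>M M)"
    and K_square_finite: "(\<integral>\<^sup>+x. (\<integral>\<^sup>+y. ennreal ((cmod (K x y))\<^sup>2) \<partial>M) \<partial>M) < \<infinity>"
begin

interpretation sigma_finite_measure M
  by (rule sigma_finite)

lemma AE_nn_integral_section_finite: "AE x in M. (\<integral>\<^sup>+y. ennreal ((cmod (K x y))\<^sup>2) \<partial>M) \<noteq> \<infinity>"
  using K_square_finite by (intro nn_integral_PInf_AE) auto

lemma square_integrable_section:
  assumes "x \<in> space M" "(\<integral>\<^sup>+y. ennreal ((cmod (K x y))\<^sup>2) \<partial>M) \<noteq> \<infinity>"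
  shows "square_integrable M (K x)"
proof -
  have [measurable]: "K x \<in> borel_measurable M"
    using measurable_Pair2[OF K_measurable assms(1)] by simp
  have "integrable M (\<lambda>y. (cmod (K x y))\<^sup>2)"
    using assms(2) by (intro integrableI_bounded) (auto simp: top.not_eq_extremum)
  then show ?thesis
    by (simp add: square_integrable_def)
qed

lemma norm_integral_section_le:
  assumes "x \<in> space M" "(\<integral>\<^sup>+y. ennreal ((cmod (K x y))\<^sup>2) \<partial>M) \<noteq> \<infinity>" "square_integrable M f"
  shows "ennreal ((cmod (LINT y|M. K x y * f y))\<^sup>2)
    \<le> (\<integral>\<^sup>+y. ennreal ((cmod (K x y))\<^sup>2) \<partial>M) * (\<integral>\<^sup>+y. ennreal ((cmod (f y))\<^sup>2) \<partial>M)"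
proof -
  have [measurable]: "K x \<in> borel_measurable M" "f \<in> borel_measurable M"
    using square_integrable_section[OF assms(1,2)] assms(3) by (simp_all add: square_integrable_def)
  have "ennreal (cmod (LINT y|M. K x y * f y)) \<le> (\<integral>\<^sup>+y. ennreal (cmod (K x y)) * ennreal (cmod (f y)) \<partial>M)"
    using integral_norm_bound_ennreal[OF integrable_mult_square_integrable[OF square_integrable_section[OF assms(1,2)] assms(3)]]
    by (simp add: norm_mult ennreal_mult)
  then have "(ennreal (cmod (LINT y|M. K x y * f y)))\<^sup>2 \<le> (\<integral>\<^sup>+y. ennreal (cmod (K x y)) * ennreal (cmod (f y)) \<partial>M)\<^sup>2"
    by (intro power_mono) auto
  also have "\<dots> \<le> (\<integral>\<^sup>+y. (ennreal (cmod (K x y)))\<^sup>2 \<partial>M) * (\<integral>\<^sup>+y. (ennreal (cmod (f y)))\<^sup>2 \<partial>M)"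
    by (rule Cauchy_Schwarz_nn_integral) measurable
  finally show ?thesis
    by (simp add: ennreal_power)
qed

lemma square_integrable_integral_operator:
  assumes f: "square_integrable M f"
  shows "square_integrable M (\<lambda>x. LINT y|M. K x y * f y)"
proof -
  have [measurable]: "f \<in> borel_measurable M"
    using f by (simp add: square_integrable_def)
  have "(\<integral>\<^sup>+x. ennreal ((cmod (LINT y|M. K x y * f y))\<^sup>2) \<partial>M)
      \<le> (\<integral>\<^sup>+x. (\<integral>\<^sup>+y. ennreal ((cmod (K x y))\<^sup>2) \<partial>M) * (\<integral>\<^sup>+y. ennreal ((cmod (f y))\<^sup>2) \<partial>M) \<partial>M)"
    using AE_nn_integral_section_finite AE_space
    by (intro nn_integral_mono_AE, eventually_elim) (auto intro: norm_integral_section_le f)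
  also have "\<dots> = (\<integral>\<^sup>+x. (\<integral>\<^sup>+y. ennreal ((cmod (K x y))\<^sup>2) \<partial>M) \<partial>M) * (\<integral>\<^sup>+y. ennreal ((cmod (f y))\<^sup>2) \<partial>M)"
    by (rule nn_integral_multc) measurable
  also have "\<dots> < \<infinity>"
    using K_square_finite f by (simp add: ennreal_mult_less_top square_integrable_def integrable_iff_bounded)
  finally have "integrable M (\<lambda>x. (cmod (LINT y|M. K x y * f y))\<^sup>2)"
    by (intro integrableI_bounded) auto
  then show ?thesis
    by (simp add: square_integrable_def)
qed

lemma sum_norm_integral_operator_le:
  fixes es :: "('a \<Rightarrow> complex) list"
  assumes es: "\<forall>e\<in>set es. square_integrable M e"
    and orthonormal: "\<forall>i<length es. \<forall>j<length es.
      (LINT x|M. (es!i) x * cnj ((es!j) x)) = (if i = j then 1 else 0)"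
  shows "(\<Sum>e\<leftarrow>es. LINT x|M. (cmod (LINT y|M. K x y * e y))\<^sup>2)
    \<le> enn2real (\<integral>\<^sup>+x. (\<integral>\<^sup>+y. ennreal ((cmod (K x y))\<^sup>2) \<partial>M) \<partial>M)"
proof -
  define n where "n = length es"
  define e where "e i = es ! i" for i
  have e: "square_integrable M (e i)" if "i < n" for i
    using es that by (simp add: e_def n_def)
  have Te: "square_integrable M (\<lambda>x. LINT y|M. K x y * e i y)" if "i < n" for i
    by (rule square_integrable_integral_operator[OF e[OF that]])
  have "ennreal (\<Sum>e\<leftarrow>es. LINT x|M. (cmod (LINT y|M. K x y * e y))\<^sup>2)
      = (\<Sum>i<n. ennreal (LINT x|M. (cmod (LINT y|M. K x y * e i y))\<^sup>2))"
    by (simp add: sum_list_sum_nth atLeast0LessThan e_def n_def sum_ennreal)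
  also have "\<dots> = (\<Sum>i<n. \<integral>\<^sup>+x. ennreal ((cmod (LINT y|M. K x y * e i y))\<^sup>2) \<partial>M)"
    using Te by (intro sum.cong refl nn_integral_eq_integral[symmetric]) (auto simp: square_integrable_def)
  also have "\<dots> = (\<integral>\<^sup>+x. (\<Sum>i<n. ennreal ((cmod (LINT y|M. K x y * e i y))\<^sup>2)) \<partial>M)"
    using Te by (intro nn_integral_sum[symmetric]) (auto simp: square_integrable_def)
  also have "\<dots> \<le> (\<integral>\<^sup>+x. (\<integral>\<^sup>+y. ennreal ((cmod (K x y))\<^sup>2) \<partial>M) \<partial>M)"
  proof (rule nn_integral_mono_AE)
    show "AE x in M. (\<Sum>i<n. ennreal ((cmod (LINT y|M. K x y * e i y))\<^sup>2)) \<le> (\<integral>\<^sup>+y. ennreal ((cmod (K x y))\<^sup>2) \<partial>M)"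
      using AE_nn_integral_section_finite AE_space
    proof eventually_elim
      case (elim x)
      have "(\<Sum>i<n. (cmod (LINT y|M. K x y * e i y))\<^sup>2) \<le> (LINT y|M. (cmod (K x y))\<^sup>2)"
        using orthonormal by (intro bessel_inequality square_integrable_section elim e) (auto simp: e_def n_def)
      moreover have "(\<integral>\<^sup>+y. ennreal ((cmod (K x y))\<^sup>2) \<partial>M) = ennreal (LINT y|M. (cmod (K x y))\<^sup>2)"
        using square_integrable_section[OF elim(2,1)] by (intro nn_integral_eq_integral) (auto simp: square_integrable_def)
      ultimately show ?case
        by (simp add: sum_ennreal)
    qed
  qed
  finally have "ennreal (\<Sum>e\<leftarrow>es. LINT x|M. (cmod (LINT y|M. K x y * e y))\<^sup>2)
      \<le> (\<integral>\<^sup>+x. (\<integral>\<^sup>+y. ennreal ((cmod (K x y))\<^sup>2) \<partial>M) \<partial>M)" .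
  then have "enn2real (ennreal (\<Sum>e\<leftarrow>es. LINT x|M. (cmod (LINT y|M. K x y * e y))\<^sup>2))
      \<le> enn2real (\<integral>\<^sup>+x. (\<integral>\<^sup>+y. ennreal ((cmod (K x y))\<^sup>2) \<partial>M) \<partial>M)"
    using K_square_finite by (intro enn2real_mono) simp_all
  moreover have "(\<Sum>e\<leftarrow>es. LINT x|M. (cmod (LINT y|M. K x y * e y))\<^sup>2) \<ge> 0"
    by (intro sum_list_nonneg) auto
  ultimately show ?thesis
    by simp
qed

lemma hilbert_schmidt_integral_opI: "hilbert_schmidt_integral_op M K"
  unfolding hilbert_schmidt_integral_op_def
proof (intro conjI allI impI exI)
  fix f assume f: "square_integrable M f"
  show "AE x in M. integrable M (\<lambda>y. K x y * f y)"
    using AE_nn_integral_section_finite AE_space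
    by eventually_elim (intro integrable_mult_square_integrable square_integrable_section f)
  show "square_integrable M (\<lambda>x. LINT y|M. K x y * f y)"
    by (rule square_integrable_integral_operator[OF f])
qed (auto intro!: sum_norm_integral_operator_le)

end

section \<open>Lebesgue measure on the hyperplane\<close>

abbreviation lborel_fun :: "nat \<Rightarrow> (nat \<Rightarrow> real) measure" where
  "lborel_fun n \<equiv> PiM {..<n} (\<lambda>_. lborel)"

lemma nn_integral_exp_neg_abs_finite:
  fixes c :: real assumes "c > 0"
  shows "(\<integral>\<^sup>+t. ennreal (exp (- (c * \<bar>t\<bar>))) \<partial>lborel) < \<infinity>"
proof -
  define f where "f t = indicator {0<..} t *\<^sub>R exp (- (t * c))" for t :: real
  have f: "integrable lborel f"
    using integrable_I0i_exp_mscale[OF assms] unfolding set_integrable_def f_def .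
  moreover have "integrable lborel (\<lambda>t. f (0 + (- 1) * t))"
    using lborel_integrable_real_affine_iff[of "- 1" f 0] f by simp
  ultimately have "integrable lborel (\<lambda>t. f t + f (0 + (- 1) * t))"
    by (rule Bochner_Integration.integrable_add)
  then have "integrable lborel (\<lambda>t. exp (- (c * \<bar>t\<bar>)))"
  proof (rule integrable_cong_AE_imp)
    show "AE t in lborel. f t + f (0 + (- 1) * t) = exp (- (c * \<bar>t\<bar>))"
      using AE_lborel_singleton[of 0] by eventually_elim (auto simp: f_def indicator_def abs_if mult.commute)
  qed measurable
  then show ?thesis
    by (simp add: integrable_iff_bounded)
qed

lemma nn_integral_prod_exp_neg_abs_finite:
  fixes c :: real assumes "c > 0"
  shows "(\<integral>\<^sup>+u. (\<Prod>i<n. ennreal (exp (- (c * \<bar>u i\<bar>)))) \<partial>lborel_fun n) < \<infinity>"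
proof -
  interpret product_sigma_finite "\<lambda>_::nat. lborel :: real measure"
    by (simp add: product_sigma_finite_def sigma_finite_lborel)
  have "(\<integral>\<^sup>+u. (\<Prod>i<n. ennreal (exp (- (c * \<bar>u i\<bar>)))) \<partial>lborel_fun n)
      = (\<Prod>i<n. (\<integral>\<^sup>+t. ennreal (exp (- (c * \<bar>t\<bar>))) \<partial>lborel))"
    by (rule product_nn_integral_prod) auto
  also have "\<dots> < \<infinity>"
    using nn_integral_exp_neg_abs_finite[OF assms] by (simp add: prod_constant power_less_top_ennreal)
  finally show ?thesis .
qed

lemma embE_measurable [measurable]: "embE N \<in> measurable (lborel_fun (N - 1)) (lborel_fun N)"
proof (unfold embE_def, rule measurable_restrict)
  fix i assume "i \<in> {..<N}"
  have coord: "(\<lambda>u. u j) \<in> borel_measurable (lborel_fun (N - 1))" if "j < N - 1" for j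
    using measurable_component_singleton[of j "{..<N - 1}" "\<lambda>_. lborel"] that by simp
  then have "(\<lambda>u. - (\<Sum>j<N - 1. u j)) \<in> borel_measurable (lborel_fun (N - 1))"
    by (intro borel_measurable_uminus borel_measurable_sum) auto
  then show "(\<lambda>u. if i < N - 1 then u i else - (\<Sum>j<N - 1. u j)) \<in> measurable (lborel_fun (N - 1)) lborel"
    using coord[of i] by (cases "i < N - 1") auto
qed

lemma sum_embE: "N \<ge> 1 \<Longrightarrow> (\<Sum>i<N. embE N u i) = 0"
  by (cases N) (auto simp: embE_def lessThan_Suc)

lemma sum_abs_le_sum_abs_embE: "N \<ge> 1 \<Longrightarrow> (\<Sum>i<N - 1. \<bar>u i\<bar>) \<le> (\<Sum>i<N. \<bar>embE N u i\<bar>)"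
  by (cases N) (auto simp: embE_def lessThan_Suc)

lemma sets_lebesgueE [measurable_cong]: "sets (lebesgueE N) = sets (lborel_fun N)"
  by (simp add: lebesgueE_def)

lemma space_lebesgueE: "space (lebesgueE N) = space (lborel_fun N)"
  by (simp add: lebesgueE_def)

lemma nn_integral_lebesgueE:
  assumes "h \<in> borel_measurable (lborel_fun N)"
  shows "(\<integral>\<^sup>+x. h x \<partial>lebesgueE N) = (\<integral>\<^sup>+u. ennreal (sqrt (real N)) * h (embE N u) \<partial>lborel_fun (N - 1))"
proof -
  have "(\<integral>\<^sup>+x. h x \<partial>lebesgueE N) = (\<integral>\<^sup>+x. ennreal (sqrt (real N)) * h x \<partial>distr (lborel_fun (N - 1)) (lborel_fun N) (embE N))"
    unfolding lebesgueE_def using assms by (intro nn_integral_density) auto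
  also have "\<dots> = (\<integral>\<^sup>+u. ennreal (sqrt (real N)) * h (embE N u) \<partial>lborel_fun (N - 1))"
    using assms by (intro nn_integral_distr embE_measurable) simp
  finally show ?thesis .
qed

lemma nn_integral_lebesgueE_exp_finite:
  assumes "N \<ge> 1" "c > 0"
  shows "(\<integral>\<^sup>+x. ennreal (exp (- (c * (\<Sum>i<N. \<bar>x i\<bar>)))) \<partial>lebesgueE N) < \<infinity>"
proof -
  have "ennreal (exp (- (c * (\<Sum>i<N. \<bar>embE N u i\<bar>)))) \<le> (\<Prod>i<N - 1. ennreal (exp (- (c * \<bar>u i\<bar>))))" for u
  proof -
    have "c * (\<Sum>i<N - 1. \<bar>u i\<bar>) \<le> c * (\<Sum>i<N. \<bar>embE N u i\<bar>)"
      using sum_abs_le_sum_abs_embE[OF assms(1), of u] assms(2) by (intro mult_left_mono) auto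
    then have "exp (- (c * (\<Sum>i<N. \<bar>embE N u i\<bar>))) \<le> exp (- (c * (\<Sum>i<N - 1. \<bar>u i\<bar>)))"
      by simp
    also have "\<dots> = exp (\<Sum>i<N - 1. - (c * \<bar>u i\<bar>))"
      by (simp add: sum_distrib_left sum_negf)
    finally have "exp (- (c * (\<Sum>i<N. \<bar>embE N u i\<bar>))) \<le> exp (\<Sum>i<N - 1. - (c * \<bar>u i\<bar>))" .
    then show ?thesis
      by (simp add: exp_sum prod_ennreal ennreal_leI)
  qed
  note bound = this
  have "(\<integral>\<^sup>+x. ennreal (exp (- (c * (\<Sum>i<N. \<bar>x i\<bar>)))) \<partial>lebesgueE N)
      = (\<integral>\<^sup>+u. ennreal (sqrt (real N)) * ennreal (exp (- (c * (\<Sum>i<N. \<bar>embE N u i\<bar>)))) \<partial>lborel_fun (N - 1))"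
    by (rule nn_integral_lebesgueE) measurable
  also have "\<dots> \<le> (\<integral>\<^sup>+u. ennreal (sqrt (real N)) * (\<Prod>i<N - 1. ennreal (exp (- (c * \<bar>u i\<bar>)))) \<partial>lborel_fun (N - 1))"
    by (rule nn_integral_mono, rule mult_left_mono[OF bound]) simp
  also have "\<dots> = ennreal (sqrt (real N)) * (\<integral>\<^sup>+u. (\<Prod>i<N - 1. ennreal (exp (- (c * \<bar>u i\<bar>)))) \<partial>lborel_fun (N - 1))"
    by (rule nn_integral_cmult) measurable
  also have "\<dots> < \<infinity>"
    using nn_integral_prod_exp_neg_abs_finite[OF assms(2), of "N - 1"] by (simp add: ennreal_mult_less_top)
  finally show ?thesis .
qed

lemma sigma_finite_lebesgueE:
  assumes "N \<ge> 1"
  shows "sigma_finite_measure (lebesgueE N)"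
proof -
  define A where "A k = {x \<in> space (lborel_fun N). (\<Sum>i<N. \<bar>x i\<bar>) \<le> real k}" for k :: nat
  have A [measurable]: "A k \<in> sets (lborel_fun N)" for k
    unfolding A_def by measurable
  have "emeasure (lebesgueE N) (A k) \<noteq> \<infinity>" for k
  proof -
    have "indicator (A k) x \<le> ennreal (exp (real k)) * ennreal (exp (- (1 * (\<Sum>i<N. \<bar>x i\<bar>))))" for x
    proof (cases "x \<in> A k")
      case True
      then have "1 \<le> exp (real k) * exp (- (1 * (\<Sum>i<N. \<bar>x i\<bar>)))"
        by (simp add: A_def flip: exp_add)
      then show ?thesis
        using True by (simp flip: ennreal_mult)
    qed simp
    then have "(\<integral>\<^sup>+x. indicator (A k) x \<partial>lebesgueE N)
        \<le> (\<integral>\<^sup>+x. ennreal (exp (real k)) * ennreal (exp (- (1 * (\<Sum>i<N. \<bar>x i\<bar>)))) \<partial>lebesgueE N)"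
      by (intro nn_integral_mono)
    then have "emeasure (lebesgueE N) (A k)
        \<le> (\<integral>\<^sup>+x. ennreal (exp (real k)) * ennreal (exp (- (1 * (\<Sum>i<N. \<bar>x i\<bar>)))) \<partial>lebesgueE N)"
      by (simp add: sets_lebesgueE)
    also have "\<dots> = ennreal (exp (real k)) * (\<integral>\<^sup>+x. ennreal (exp (- (1 * (\<Sum>i<N. \<bar>x i\<bar>)))) \<partial>lebesgueE N)"
      by (rule nn_integral_cmult) measurable
    also have "\<dots> < \<infinity>"
      using nn_integral_lebesgueE_exp_finite[OF assms, of 1] by (simp add: ennreal_mult_less_top)
    finally show ?thesis by simp
  qed
  moreover have "(\<Union>k. A k) = space (lebesgueE N)"
  proof
    show "space (lebesgueE N) \<subseteq> (\<Union>k. A k)"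
    proof
      fix x assume "x \<in> space (lebesgueE N)"
      moreover obtain k :: nat where "(\<Sum>i<N. \<bar>x i\<bar>) \<le> real k"
        using real_arch_simple by blast
      ultimately show "x \<in> (\<Union>k. A k)"
        unfolding A_def space_lebesgueE by blast
    qed
  qed (unfold A_def space_lebesgueE, blast)
  ultimately show ?thesis
    unfolding sigma_finite_measure_def using A
    by (intro exI[of _ "range A"]) (simp add: sets_lebesgueE image_subset_iff)
qed

lemma AE_lebesgueE_sum_eq_0:
  assumes "N \<ge> 1"
  shows "AE x in lebesgueE N. (\<Sum>i<N. x i) = 0"
proof -
  have "{x \<in> space (lborel_fun N). (\<Sum>i<N. x i) = 0} \<in> sets (lborel_fun N)"
    by measurable
  then have "AE x in distr (lborel_fun (N - 1)) (lborel_fun N) (embE N). (\<Sum>i<N. x i) = 0"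
    using assms by (simp add: AE_distr_iff[OF embE_measurable] sum_embE)
  then show ?thesis
    unfolding lebesgueE_def by (simp add: AE_density)
qed

lemma borel_measurable_hgamma [measurable]: "hgamma ap am \<in> borel_measurable borel"
  unfolding hgamma_def set_lebesgue_integral_def by measurable

lemma borel_measurable_kernelS:
  "case_prod (kernelS ap am \<eta> N \<xi>) \<in> borel_measurable (lebesgueE N \<Otimes>\<^sub>M lebesgueE N)"
proof -
  have [measurable]: "hgammaR ap am \<in> borel_measurable borel" "hgammaL ap am \<in> borel_measurable borel"
    unfolding hgammaR_def[abs_def] hgammaL_def[abs_def] by measurable
  have [measurable]: "(\<lambda>p. fst p i) \<in> borel_measurable (lborel_fun N \<Otimes>\<^sub>M lborel_fun N)"
    "(\<lambda>p. snd p i) \<in> borel_measurable (lborel_fun N \<Otimes>\<^sub>M lborel_fun N)" if "i < N" for i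
    using measurable_compose[OF measurable_fst measurable_component_singleton[of i "{..<N}" "\<lambda>_. lborel"]]
      measurable_compose[OF measurable_snd measurable_component_singleton[of i "{..<N}" "\<lambda>_. lborel"]] that
    by auto
  have "case_prod (kernelS ap am \<eta> N \<xi>) \<in> borel_measurable (lborel_fun N \<Otimes>\<^sub>M lborel_fun N)"
    unfolding kernelS_def[abs_def] Let_def case_prod_beta'
  proof (intro borel_measurable_prod)
    fix n assume "n \<in> {..<N}"
    then have "n < N" "(n + 1) mod N < N"
      by auto
    then show "(\<lambda>p. hgammaR ap am (complex_of_real (snd p n - fst p ((n + 1) mod N)) - \<i> * complex_of_real ((ap + am) / 2 / 2)
                              - complex_of_real (\<eta> / 2) + \<xi>) /
           hgammaL ap am (complex_of_real (snd p n - fst p n) + \<i> * complex_of_real ((ap + am) / 2 / 2)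
                              + complex_of_real (\<eta> / 2) + \<xi>)) \<in> borel_measurable (lborel_fun N \<Otimes>\<^sub>M lborel_fun N)"
      by measurable
  qed
  then show ?thesis
    by (subst measurable_cong_sets[OF sets_pair_measure_cong[OF sets_lebesgueE sets_lebesgueE] refl])
qed

lemma nn_integral_square_kernelS_finite:
  fixes ap am \<eta> :: real and N :: nat and \<xi> :: complex
  assumes "ap > 0" "am > 0" "N \<ge> 1" "\<bar>Im \<xi>\<bar> < (ap + am) / 2 / 2"
  shows "(\<integral>\<^sup>+x. (\<integral>\<^sup>+y. ennreal ((cmod (kernelS ap am \<eta> N \<xi> x y))\<^sup>2) \<partial>lebesgueE N) \<partial>lebesgueE N) < \<infinity>"
proof -
  obtain B \<delta> where "\<delta> > 0" and kernel_le:
    "\<And>x y. (\<Sum>i<N. x i) = 0 \<Longrightarrow>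
      cmod (kernelS ap am \<eta> N \<xi> x y) \<le> B * exp (- \<delta> * ((\<Sum>i<N. \<bar>x i\<bar>) + (\<Sum>i<N. \<bar>y i\<bar>)))"
    using norm_kernelS_le[OF assms] by metis
  define E where "E x = ennreal (exp (- (2 * \<delta> * (\<Sum>i<N. \<bar>x i\<bar>))))" for x :: "nat \<Rightarrow> real"
  have [measurable]: "E \<in> borel_measurable (lebesgueE N)"
    unfolding E_def by measurable
  have E_finite: "(\<integral>\<^sup>+x. E x \<partial>lebesgueE N) < \<infinity>"
    unfolding E_def using nn_integral_lebesgueE_exp_finite[OF assms(3), of "2 * \<delta>"] \<open>\<delta> > 0\<close> by simp
  have "ennreal ((cmod (kernelS ap am \<eta> N \<xi> x y))\<^sup>2) \<le> ennreal (B\<^sup>2) * E x * E y"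
    if "(\<Sum>i<N. x i) = 0" for x y
  proof -
    have "(cmod (kernelS ap am \<eta> N \<xi> x y))\<^sup>2 \<le> (B * exp (- \<delta> * ((\<Sum>i<N. \<bar>x i\<bar>) + (\<Sum>i<N. \<bar>y i\<bar>))))\<^sup>2"
      using kernel_le[OF that, of y] by (intro power_mono) auto
    also have "\<dots> = B\<^sup>2 * exp (- (2 * \<delta> * (\<Sum>i<N. \<bar>x i\<bar>))) * exp (- (2 * \<delta> * (\<Sum>i<N. \<bar>y i\<bar>)))"
      by (simp add: power_mult_distrib algebra_simps flip: exp_add exp_double)
    finally show ?thesis
      by (simp add: E_def ennreal_leI flip: ennreal_mult)
  qed
  then have "(\<integral>\<^sup>+x. (\<integral>\<^sup>+y. ennreal ((cmod (kernelS ap am \<eta> N \<xi> x y))\<^sup>2) \<partial>lebesgueE N) \<partial>lebesgueE N)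
      \<le> (\<integral>\<^sup>+x. (\<integral>\<^sup>+y. ennreal (B\<^sup>2) * E x * E y \<partial>lebesgueE N) \<partial>lebesgueE N)"
    using AE_lebesgueE_sum_eq_0[OF assms(3)] by (intro nn_integral_mono_AE) (auto elim!: AE_mp intro!: nn_integral_mono)
  also have "\<dots> = ennreal (B\<^sup>2) * (\<integral>\<^sup>+x. E x \<partial>lebesgueE N) * (\<integral>\<^sup>+y. E y \<partial>lebesgueE N)"
    by (simp add: nn_integral_cmult nn_integral_multc)
  also have "\<dots> < \<infinity>"
    using E_finite by (simp add: ennreal_mult_less_top)
  finally show ?thesis .
qed

theorem theoremB1:
  fixes ap am \<eta> :: real and N :: nat and \<xi> :: complex
  assumes "ap > 0" and "am > 0" and "N \<ge> 2"
    and "\<bar>Im \<xi>\<bar> < (ap + am) / 2 / 2"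
  shows "hilbert_schmidt_integral_op (lebesgueE N) (kernelS ap am \<eta> N \<xi>)"
proof -
  have "N \<ge> 1"
    using \<open>N \<ge> 2\<close> by simp
  show ?thesis
    using sigma_finite_lebesgueE[OF \<open>N \<ge> 1\<close>] borel_measurable_kernelS
      nn_integral_square_kernelS_finite[OF assms(1,2) \<open>N \<ge> 1\<close> assms(4)]
    by (rule hilbert_schmidt_integral_opI)
qed

end
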